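(* Let $u:\mathbb{R}\times\mathbb{R}\to\mathbb{R}$ be a solution of the one-dimensional cubic nonlinear wave equation $$u_{tt}-u_{xx}+u^{3}=0,\qquad u(0,x)=u_0(x),\quad u_t(0,x)=u_1(x),$$ where $u_0\in C^1(\mathbb{R})$ with $u_0$ and $\partial_x u_0$ bounded on $\mathbb{R}$, and $u_1\in C^0(\mathbb{R})$ is bounded on $\mathbb{R}$. Then there is a constant $C$ (depending on $\|u_0\|_{L^\infty}$, $\|\partial_x u_0\|_{L^\infty}$, $\|u_1\|_{L^\infty}$) such that for all $t\ge 1$ and all $x\in\mathbb{R}$, $$|u(t,x)|\le C\,t^{1/3}.$$
   Context: The equation is the defocusing cubic wave equation on the real line with real-valued data that are uniformly $C^1\times C^0$, i.e. $\|u_0\|_{L^\infty}+\|\partial_x u_0\|_{L^\infty}+\|u_1\|_{L^\infty}<\infty$. *)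

theory Defs
  imports "HOL-Analysis.Analysis"
begin

text \<open>Mild (Duhamel / d'Alembert integral) solution on the whole line R x R of
  u_tt - u_xx + u^3 = 0, u(0) = u0, u_t(0) = u1.\<close>

definition cubic_wave_mild_solution ::
  "(real \<Rightarrow> real) \<Rightarrow> (real \<Rightarrow> real) \<Rightarrow> (real \<Rightarrow> real \<Rightarrow> real) \<Rightarrow> bool" where
  "cubic_wave_mild_solution u0 u1 u \<longleftrightarrow>
     continuous_on UNIV (\<lambda>(t, x). u t x) \<and>
     (\<forall>t x. t \<ge> 0 \<longrightarrow>
        u t x = (u0 (x + t) + u0 (x - t)) / 2
                + integral {x - t .. x + t} u1 / 2
                - integral {0 .. t} (\<lambda>s. integral {x - (t - s) .. x + (t - s)} (\<lambda>y. (u s y) ^ 3)) / 2) \<and>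
     (\<forall>t x. t \<le> 0 \<longrightarrow>
        u t x = (u0 (x + t) + u0 (x - t)) / 2
                - integral {x + t .. x - t} u1 / 2
                - integral {t .. 0} (\<lambda>s. integral {x - (s - t) .. x + (s - t)} (\<lambda>y. (u s y) ^ 3)) / 2)"

end

theory Submission
  imports Defs
begin

text \<open>In the null coordinates \<open>p = x + t\<close>, \<open>q = x - t\<close> the Duhamel formula shows that
  \<open>U(p, q) = u(t, x)\<close> satisfies \<open>\<partial>\<^sub>p U = D\<^sub>+/2\<close> and \<open>\<partial>\<^sub>q U = -D\<^sub>-/2\<close>, where
  \<open>D\<^sub>\<plusminus> = u\<^sub>t \<plusminus> u\<^sub>x\<close>, and that \<open>\<partial>\<^sub>q D\<^sub>+ = U\<^sup>3/2\<close>, \<open>\<partial>\<^sub>p D\<^sub>- = -U\<^sup>3/2\<close>. Hence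
  \<open>\<partial>\<^sub>q (D\<^sub>+\<^sup>2) = \<partial>\<^sub>p (U\<^sup>4/2)\<close> and \<open>\<partial>\<^sub>p (D\<^sub>-\<^sup>2) = \<partial>\<^sub>q (U\<^sup>4/2)\<close>. Integrating these
  conservation laws over the triangle below the characteristic segment \<open>q = x - t\<close>,
  \<open>x - t \<le> p \<le> x + t\<close> bounds both \<open>\<integral> D\<^sub>+\<^sup>2\<close> and \<open>\<integral> U\<^sup>4\<close> along that segment by \<open>O(t)\<close>,
  since the energy density of the data is bounded. On the last piece of the segment, of length
  \<open>t\<^sup>-\<^sup>1\<^sup>/\<^sup>3\<close>, some value of \<open>U\<^sup>4\<close> is then \<open>O(t\<^sup>4\<^sup>/\<^sup>3)\<close>, and by AM-GM the oscillation
  \<open>\<integral> |D\<^sub>+|/2\<close> of \<open>U\<close> there is \<open>O(t\<^sup>1\<^sup>/\<^sup>3)\<close>.\<close>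

section \<open>Oriented integrals\<close>

definition oriented_integral :: "real \<Rightarrow> real \<Rightarrow> (real \<Rightarrow> real) \<Rightarrow> real" where
  "oriented_integral a b f = (if a \<le> b then integral {a..b} f else - integral {b..a} f)"

lemma oriented_integral_eq_integral: "a \<le> b \<Longrightarrow> oriented_integral a b f = integral {a..b} f"
  by (simp add: oriented_integral_def)

lemma oriented_integral_refl [simp]: "oriented_integral a a f = 0"
  by (simp add: oriented_integral_def)

lemma oriented_integral_swap: "oriented_integral a b f = - oriented_integral b a f"
  by (auto simp: oriented_integral_def)

lemma oriented_integral_uminus: "oriented_integral a b (\<lambda>x. - f x) = - oriented_integral a b f"
  by (simp add: oriented_integral_def)

lemma oriented_integral_eq_diff: "oriented_integral a b f = integral {a..b} f - integral {b..a} f"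
  by (cases a b rule: linorder_cases) (auto simp: oriented_integral_def)

lemma oriented_integral_cong:
  "(\<And>x. x \<in> {min a b..max a b} \<Longrightarrow> f x = g x) \<Longrightarrow> oriented_integral a b f = oriented_integral a b g"
  by (auto simp: oriented_integral_def min_def max_def intro!: integral_cong)

lemma oriented_integral_combine:
  fixes f :: "real \<Rightarrow> real"
  assumes "continuous_on UNIV f"
  shows "oriented_integral a b f + oriented_integral b c f = oriented_integral a c f"
proof -
  have from_left: "oriented_integral a b f = integral {m..b} f - integral {m..a} f"
    if "m \<le> a" "m \<le> b" for m a b
  proof -
    have "integral {m..min a b} f + integral {min a b..max a b} f = integral {m..max a b} f"
      using that
      by (intro Henstock_Kurzweil_Integration.integral_combine integrable_continuous_real
          continuous_on_subset[OF assms]) auto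
    then show ?thesis
      by (auto simp: oriented_integral_def min_def max_def split: if_splits)
  qed
  show ?thesis
    using from_left[of "min a (min b c)"] by simp
qed

lemma oriented_integral_rescale:
  fixes f :: "real \<Rightarrow> real"
  assumes "continuous_on UNIV f"
  shows "oriented_integral a b f = integral {0..1} (\<lambda>\<tau>. (b - a) * f (a + \<tau> * (b - a)))"
proof -
  have between: "a + \<tau> * (b - a) \<in> {min a b..max a b}" if "0 \<le> \<tau>" "\<tau> \<le> 1" for \<tau>
    using that mult_left_le_one_le[of "b - a" \<tau>] mult_left_le_one_le[of "a - b" \<tau>]
    by (cases "a \<le> b") (auto simp: algebra_simps min_def max_def mult_left_mono mult_right_mono)
  have "((\<lambda>\<tau>. (b - a) *\<^sub>R f (a + \<tau> * (b - a))) has_integral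
      (integral {a + 0 * (b - a)..a + 1 * (b - a)} f - integral {a + 1 * (b - a)..a + 0 * (b - a)} f)) {0..1}"
    by (rule has_integral_substitution_general[where s = "{}" and c = "min a b" and d = "max a b"
          and g = "\<lambda>\<tau>. a + \<tau> * (b - a)" and g' = "\<lambda>_. b - a"])
      (auto intro!: between continuous_on_subset[OF assms] continuous_intros derivative_eq_intros)
  from integral_unique[OF this] show ?thesis
    by (simp add: oriented_integral_eq_diff)
qed

lemma continuous_on_curried_compose:
  fixes F :: "'a::topological_space \<Rightarrow> 'b::topological_space \<Rightarrow> 'c::topological_space"
  assumes "continuous_on UNIV (\<lambda>z. F (fst z) (snd z))" "continuous_on S f" "continuous_on S g"
  shows "continuous_on S (\<lambda>x. F (f x) (g x))"
  using continuous_on_compose2[OF assms(1) continuous_on_Pair[OF assms(2,3)]] by simp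

lemma continuous_on_oriented_integral:
  fixes k :: "'a::topological_space \<Rightarrow> real \<Rightarrow> real" and a b :: "'b::topological_space \<Rightarrow> real"
  assumes k: "continuous_on UNIV (\<lambda>z. k (fst z) (snd z))"
    and "continuous_on S a" "continuous_on S b" "continuous_on S g"
  shows "continuous_on S (\<lambda>x. oriented_integral (a x) (b x) (k (g x)))"
proof -
  have "continuous_on UNIV (k y)" for y
    by (intro continuous_on_curried_compose[OF k] continuous_intros)
  then have "oriented_integral (a x) (b x) (k (g x)) =
      integral (cbox 0 1) (\<lambda>\<tau>. (b x - a x) * k (g x) (a x + \<tau> * (b x - a x)))" for x
    by (simp add: oriented_integral_rescale)
  moreover have "continuous_on S
      (\<lambda>x. integral (cbox 0 1) (\<lambda>\<tau>. (b x - a x) * k (g x) (a x + \<tau> * (b x - a x))))"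
    by (rule integral_continuous_on_param)
      (auto simp: case_prod_beta intro!: continuous_intros continuous_on_curried_compose[OF k]
        continuous_on_compose2[OF assms(2)] continuous_on_compose2[OF assms(3)]
        continuous_on_compose2[OF assms(4)])
  ultimately show ?thesis
    by simp
qed

lemma oriented_integral_has_real_derivative:
  fixes f :: "real \<Rightarrow> real"
  assumes f: "continuous_on UNIV f"
  shows "((\<lambda>b. oriented_integral a b f) has_real_derivative f b) (at b)"
proof -
  define m where "m = min a b - 1"
  have "((\<lambda>w. integral {m..w} f) has_real_derivative f b) (at b within {m..b + 1})"
    by (rule integral_has_real_derivative) (auto simp: m_def intro: continuous_on_subset[OF f])
  moreover have "at b within {m..b + 1} = at b"
    by (rule at_within_Icc_at) (auto simp: m_def)
  ultimately have "((\<lambda>w. integral {m..w} f - integral {m..a} f) has_real_derivative f b) (at b)"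
    by (auto intro!: derivative_eq_intros)
  then show ?thesis
  proof (rule has_field_derivative_transform_within_open[where S = "{m<..}"])
    show "integral {m..w} f - integral {m..a} f = oriented_integral a w f" if "w \<in> {m<..}" for w
      using oriented_integral_combine[OF f, of m a w] that
      by (simp add: m_def oriented_integral_eq_integral oriented_integral_swap[of m a])
  qed (auto simp: m_def)
qed

lemma has_real_derivative_oriented_integral_upper [derivative_intros]:
  fixes f :: "real \<Rightarrow> real"
  assumes "continuous_on UNIV f" and "(g has_real_derivative g') (at x within S)"
  shows "((\<lambda>x. oriented_integral a (g x) f) has_real_derivative f (g x) * g') (at x within S)"
  by (rule DERIV_chain2[OF oriented_integral_has_real_derivative[OF assms(1)] assms(2)])

lemma has_real_derivative_oriented_integral_lower [derivative_intros]:
  fixes f :: "real \<Rightarrow> real"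
  assumes "continuous_on UNIV f" and "(g has_real_derivative g') (at x within S)"
  shows "((\<lambda>x. oriented_integral (g x) b f) has_real_derivative - f (g x) * g') (at x within S)"
  using has_real_derivative_oriented_integral_upper[OF assms, of b]
  by (subst oriented_integral_swap) (auto intro: derivative_eq_intros)

lemma oriented_integral_has_real_derivative_param:
  fixes F F' :: "real \<Rightarrow> real \<Rightarrow> real"
  assumes F_cont: "\<And>x. continuous_on UNIV (F x)"
    and F'_cont: "continuous_on UNIV (\<lambda>z. F' (fst z) (snd z))"
    and F_deriv: "\<And>x y. ((\<lambda>x. F x y) has_real_derivative F' x y) (at x)"
  shows "((\<lambda>x. oriented_integral a b (F x)) has_real_derivative oriented_integral a b (F' x)) (at x)"
proof -
  have "((\<lambda>x. integral (cbox c d) (F x)) has_real_derivative integral (cbox c d) (F' x)) (at x)" for c d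
    using F_deriv F'_cont
    by (intro leibniz_rule_field_derivative[where U = UNIV, simplified])
      (auto simp: case_prod_beta intro: integrable_continuous_real continuous_on_subset[OF F_cont]
        continuous_on_subset)
  then show ?thesis
    by (cases "a \<le> b") (auto simp: oriented_integral_def intro!: derivative_eq_intros)
qed

lemma oriented_integral_has_real_derivative_variable_limit:
  fixes F F' :: "real \<Rightarrow> real \<Rightarrow> real"
  assumes F_cont: "\<And>x. continuous_on UNIV (F x)"
    and F'_cont: "continuous_on UNIV (\<lambda>z. F' (fst z) (snd z))"
    and F_deriv: "\<And>x y. ((\<lambda>x. F x y) has_real_derivative F' x y) (at x)"
    and h: "(h has_real_derivative h') (at x)"
  shows "((\<lambda>x. oriented_integral c (h x) (F x)) has_real_derivative
      h' * F x (h x) + oriented_integral c (h x) (F' x)) (at x)"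
proof -
  have partials: "((\<lambda>(s, y). oriented_integral c s (F y)) has_derivative
      (\<lambda>(ds, dy). F x (h x) * ds + blinfun_mult_right (oriented_integral c (h x) (F' x)) dy))
      (at (h x, x) within UNIV \<times> UNIV)"
  proof (rule has_derivative_partialsI)
    show "((\<lambda>s. oriented_integral c s (F x)) has_derivative (*) (F x (h x))) (at (h x) within UNIV)"
      using oriented_integral_has_real_derivative[OF F_cont] by (simp add: has_field_derivative_def)
    show "((\<lambda>y. oriented_integral c s (F y)) has_derivative
        blinfun_mult_right (oriented_integral c s (F' y))) (at y within UNIV)" for s y
      using oriented_integral_has_real_derivative_param[OF F_cont F'_cont F_deriv]
      by (simp add: has_field_derivative_eq_has_derivative_blinfun)
    have "continuous_on UNIV (\<lambda>z. oriented_integral c (fst z) (F' (snd z)))"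
      by (intro continuous_on_oriented_integral[OF F'_cont] continuous_intros)
    then have "isCont (\<lambda>z. blinfun_mult_right (oriented_integral c (fst z) (F' (snd z)))) (h x, x)"
      by (intro continuous_intros) (simp add: continuous_on_eq_continuous_at)
    then show "continuous (at (h x, x) within UNIV \<times> UNIV)
        (\<lambda>(s, y). blinfun_mult_right (oriented_integral c s (F' y)))"
      by (simp add: case_prod_beta')
  qed auto
  have "((\<lambda>x. (h x, x)) has_derivative (\<lambda>d. (d * h', d))) (at x)"
    using h by (auto intro!: derivative_eq_intros simp: has_field_derivative_def mult.commute)
  from has_derivative_compose[OF this partials[simplified]]
  have "((\<lambda>x. oriented_integral c (h x) (F x)) has_derivative
      (\<lambda>d. F x (h x) * (d * h') + oriented_integral c (h x) (F' x) * d)) (at x)"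
    by simp
  then show ?thesis
    unfolding has_field_derivative_def by (rule has_derivative_eq_rhs) (auto simp: algebra_simps)
qed

lemma oriented_integral_fundamental_theorem:
  fixes f f' :: "real \<Rightarrow> real"
  assumes "\<And>x. x \<in> {min a b..max a b} \<Longrightarrow> (f has_real_derivative f' x) (at x within {min a b..max a b})"
  shows "oriented_integral a b f' = f b - f a"
proof (cases "a \<le> b")
  case True
  then have "(f' has_integral (f b - f a)) {a..b}"
    using assms by (intro fundamental_theorem_of_calculus) (auto simp: has_real_derivative_iff_has_vector_derivative)
  with True show ?thesis
    by (simp add: oriented_integral_eq_integral integral_unique)
next
  case False
  then have "(f' has_integral (f a - f b)) {b..a}"
    using assms by (intro fundamental_theorem_of_calculus) (auto simp: has_real_derivative_iff_has_vector_derivative)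
  with False show ?thesis
    by (simp add: oriented_integral_def integral_unique)
qed

text \<open>The conservation law \<open>\<partial>\<^sub>x F = H = \<partial>\<^sub>y G\<close> integrated over the triangle with vertices
  \<open>(c, c)\<close>, \<open>(d, c)\<close>, \<open>(d, d)\<close>.\<close>

lemma oriented_integral_triangle:
  fixes F G H :: "real \<Rightarrow> real \<Rightarrow> real"
  assumes F_cont: "continuous_on UNIV (\<lambda>z. F (fst z) (snd z))"
    and H_cont: "continuous_on UNIV (\<lambda>z. H (fst z) (snd z))"
    and F_deriv: "\<And>x y. ((\<lambda>x. F x y) has_real_derivative H x y) (at x)"
    and G_deriv: "\<And>x y. x \<in> {min c d..max c d} \<Longrightarrow> y \<in> {min c x..max c x} \<Longrightarrow>
      (G x has_real_derivative H x y) (at y within {min c x..max c x})"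
  shows "oriented_integral c d (F d) = oriented_integral c d (\<lambda>x. F x x + G x x - G x c)"
proof -
  have F_slice: "continuous_on UNIV (F x)" for x
    by (intro continuous_on_curried_compose[OF F_cont] continuous_intros)
  have "((\<lambda>x. oriented_integral c x (F x)) has_real_derivative F x x + oriented_integral c x (H x)) (at x)" for x
    using oriented_integral_has_real_derivative_variable_limit[OF F_slice H_cont F_deriv DERIV_ident]
    by simp
  then have "oriented_integral c d (F d) = oriented_integral c d (\<lambda>x. F x x + oriented_integral c x (H x))"
    by (subst oriented_integral_fundamental_theorem) (auto intro: has_field_derivative_at_within)
  also have "\<dots> = oriented_integral c d (\<lambda>x. F x x + G x x - G x c)"
  proof (rule oriented_integral_cong)
    fix x assume "x \<in> {min c d..max c d}"
    from oriented_integral_fundamental_theorem[OF G_deriv[OF this]]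
    show "F x x + oriented_integral c x (H x) = F x x + G x x - G x c"
      by simp
  qed
  finally show ?thesis .
qed

section \<open>An interpolation inequality on an interval\<close>

lemma abs_le_max_one_of_power_le:
  fixes w M :: real
  assumes "\<bar>w\<bar> ^ n \<le> M" and "n \<noteq> 0"
  shows "\<bar>w\<bar> \<le> max 1 M"
proof (cases "\<bar>w\<bar> \<le> 1")
  case False
  then have "\<bar>w\<bar> ^ 1 \<le> \<bar>w\<bar> ^ n"
    using assms(2) by (intro power_increasing) auto
  with assms(1) show ?thesis
    by simp
qed simp

lemma obtains_le_mean_integral:
  fixes g :: "real \<Rightarrow> real"
  assumes "a \<le> b" and g: "continuous_on {a..b} g"
  obtains s where "s \<in> {a..b}" and "g s * (b - a) \<le> integral {a..b} g"
proof -
  obtain s where s: "s \<in> {a..b}" and min: "\<And>y. y \<in> {a..b} \<Longrightarrow> g s \<le> g y"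
    using continuous_attains_inf[OF compact_Icc _ g] assms(1) by auto
  have "integral {a..b} (\<lambda>_. g s) \<le> integral {a..b} g"
    by (intro integral_le integrable_continuous_real g min) auto
  with s assms(1) show thesis
    by (intro that) (auto simp: mult.commute)
qed

lemma abs_diff_le_integral_square:
  fixes f f' :: "real \<Rightarrow> real"
  assumes s: "s \<in> {a..b}" and "c > 0"
    and f: "\<And>x. x \<in> {a..b} \<Longrightarrow> (f has_real_derivative f' x) (at x within {a..b})"
    and f': "continuous_on {a..b} f'"
  shows "\<bar>f b - f s\<bar> \<le> (integral {a..b} (\<lambda>x. f' x ^ 2) / c + c * (b - a)) / 2"
proof -
  have f'_right: "continuous_on {s..b} f'"
    by (rule continuous_on_subset[OF f']) (use s in auto)
  have "(f' has_integral (f b - f s)) {s..b}"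
  proof (rule fundamental_theorem_of_calculus)
    fix x assume "x \<in> {s..b}"
    with s show "(f has_vector_derivative f' x) (at x within {s..b})"
      unfolding has_real_derivative_iff_has_vector_derivative[symmetric]
      by (intro DERIV_subset[OF f]) auto
  qed (use s in auto)
  then have "\<bar>f b - f s\<bar> = norm (integral {s..b} f')"
    by (simp add: integral_unique)
  also have "\<dots> \<le> integral {s..b} (\<lambda>x. \<bar>f' x\<bar>)"
    using f'_right by (intro integral_norm_bound_integral integrable_continuous_real continuous_intros) auto
  also have "\<dots> \<le> integral {a..b} (\<lambda>x. \<bar>f' x\<bar>)"
    using s f'_right by (intro integral_subset_le integrable_continuous_real continuous_intros f') auto
  also have "\<dots> \<le> integral {a..b} (\<lambda>x. (f' x ^ 2 / c + c) / 2)"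
  proof (intro integral_le integrable_continuous_real continuous_intros f')
    fix x
    have "0 \<le> (\<bar>f' x\<bar> - c) ^ 2 / c"
      using \<open>c > 0\<close> by simp
    then show "\<bar>f' x\<bar> \<le> (f' x ^ 2 / c + c) / 2"
      using \<open>c > 0\<close> by (simp add: power2_eq_square field_simps)
  qed (use \<open>c > 0\<close> in auto)
  also have "\<dots> = (integral {a..b} (\<lambda>x. f' x ^ 2) / c + c * (b - a)) / 2"
  proof -
    have "(\<lambda>x. f' x ^ 2 / c) integrable_on {a..b}"
      using \<open>c > 0\<close> by (intro integrable_continuous_real continuous_intros f') auto
    then have "integral {a..b} (\<lambda>x. f' x ^ 2 / c + c)
        = integral {a..b} (\<lambda>x. f' x ^ 2 / c) + integral {a..b} (\<lambda>x. c)"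
      by (intro integral_add) auto
    with s show ?thesis
      by (simp add: integral_divide)
  qed
  finally show ?thesis .
qed

lemma abs_le_of_quartic_and_square_integrals:
  fixes f f' :: "real \<Rightarrow> real"
  assumes "c > 0" and "a \<le> b" and "b - a = 1 / c"
    and f: "\<And>x. x \<in> {a..b} \<Longrightarrow> (f has_real_derivative f' x) (at x within {a..b})"
    and f': "continuous_on {a..b} f'"
    and quartic: "integral {a..b} (\<lambda>x. f x ^ 4) \<le> M * c ^ 3"
    and square: "integral {a..b} (\<lambda>x. f' x ^ 2) \<le> N * c ^ 3"
  shows "\<bar>f b\<bar> \<le> (max 1 M + (N + 1) / 2) * c"
proof -
  have "continuous_on {a..b} f"
    using f by (rule DERIV_continuous_on)
  then have "continuous_on {a..b} (\<lambda>x. f x ^ 4)"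
    by (intro continuous_intros)
  then obtain s where s: "s \<in> {a..b}" and "f s ^ 4 * (b - a) \<le> integral {a..b} (\<lambda>x. f x ^ 4)"
    by (rule obtains_le_mean_integral[OF \<open>a \<le> b\<close>])
  with \<open>b - a = 1 / c\<close> have "f s ^ 4 / c \<le> integral {a..b} (\<lambda>x. f x ^ 4)"
    by simp
  then have "f s ^ 4 \<le> c * integral {a..b} (\<lambda>x. f x ^ 4)"
    using \<open>c > 0\<close> by (simp add: pos_divide_le_eq mult.commute)
  also have "\<dots> \<le> c * (M * c ^ 3)"
    using quartic \<open>c > 0\<close> by (intro mult_left_mono) auto
  finally have "f s ^ 4 \<le> M * c ^ 4"
    by (simp add: power_numeral_reduce algebra_simps)
  then have "\<bar>\<bar>f s\<bar> / c\<bar> ^ 4 \<le> M"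
    using \<open>c > 0\<close> by (simp add: power_divide power_abs divide_le_eq)
  from abs_le_max_one_of_power_le[OF this] have f_s: "\<bar>f s\<bar> \<le> max 1 M * c"
    using \<open>c > 0\<close> by (simp add: divide_le_eq)
  have "\<bar>f b - f s\<bar> \<le> (integral {a..b} (\<lambda>x. f' x ^ 2) / c ^ 2 + c ^ 2 * (b - a)) / 2"
    using \<open>c > 0\<close> by (intro abs_diff_le_integral_square[OF s _ f f']) auto
  also have "\<dots> \<le> (N * c ^ 3 / c ^ 2 + c ^ 2 * (b - a)) / 2"
    using square by (simp add: divide_right_mono)
  also have "\<dots> = (N + 1) / 2 * c"
    using \<open>c > 0\<close> \<open>b - a = 1 / c\<close> by (simp add: field_simps power2_eq_square power3_eq_cube)
  finally have oscillation: "\<bar>f b - f s\<bar> \<le> (N + 1) / 2 * c" .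
  have "\<bar>f b\<bar> \<le> \<bar>f s\<bar> + \<bar>f b - f s\<bar>"
    by arith
  also have "\<dots> \<le> max 1 M * c + (N + 1) / 2 * c"
    using f_s oscillation by (rule add_mono)
  finally show ?thesis
    by (simp add: distrib_right)
qed

section \<open>Mild solutions in null coordinates\<close>

locale cubic_wave_mild =
  fixes u0 u0' u1 :: "real \<Rightarrow> real" and u :: "real \<Rightarrow> real \<Rightarrow> real"
  assumes u0_deriv: "\<And>x. (u0 has_real_derivative u0' x) (at x)"
    and u0'_cont: "continuous_on UNIV u0'"
    and u1_cont: "continuous_on UNIV u1"
    and mild: "cubic_wave_mild_solution u0 u1 u"
begin

lemma u_cont: "continuous_on UNIV (\<lambda>z. u (fst z) (snd z))"
  using mild by (simp add: cubic_wave_mild_solution_def case_prod_beta')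

lemma continuous_on_u [continuous_intros]:
  "continuous_on S f \<Longrightarrow> continuous_on S g \<Longrightarrow> continuous_on S (\<lambda>x. u (f x) (g x))"
  by (rule continuous_on_curried_compose[OF u_cont])

lemma continuous_on_u_cube: "continuous_on UNIV (\<lambda>z. u (fst z) (snd z) ^ 3)"
  by (intro continuous_intros)

text \<open>Null coordinates \<open>p = x + t\<close>, \<open>q = x - t\<close>: \<open>U\<close> is \<open>u\<close>, \<open>duhamel\<close> is the right-hand side
  of the mild formula, and \<open>Dplus\<close>, \<open>Dminus\<close> are \<open>u\<^sub>t + u\<^sub>x = 2 \<partial>\<^sub>p U\<close> and
  \<open>u\<^sub>t - u\<^sub>x = -2 \<partial>\<^sub>q U\<close> as obtained by differentiating it.\<close>

definition U :: "real \<Rightarrow> real \<Rightarrow> real" where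
  "U p q = u ((p - q) / 2) ((p + q) / 2)"

definition Dplus :: "real \<Rightarrow> real \<Rightarrow> real" where
  "Dplus p q = u0' p + u1 p - oriented_integral 0 ((p - q) / 2) (\<lambda>s. u s (p - s) ^ 3)"

definition Dminus :: "real \<Rightarrow> real \<Rightarrow> real" where
  "Dminus p q = u1 q - u0' q - oriented_integral 0 ((p - q) / 2) (\<lambda>s. u s (q + s) ^ 3)"

definition duhamel :: "real \<Rightarrow> real \<Rightarrow> real" where
  "duhamel p q = (u0 p + u0 q) / 2 + oriented_integral q p u1 / 2
     - oriented_integral 0 ((p - q) / 2) (\<lambda>s. oriented_integral (q + s) (p - s) (\<lambda>y. u s y ^ 3)) / 2"

lemma U_eq_duhamel:
  assumes "q \<le> p"
  shows "U p q = duhamel p q"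
proof -
  define t x where "t = (p - q) / 2" and "x = (p + q) / 2"
  have "t \<ge> 0" and xt: "x + t = p" "x - t = q"
    using assms by (simp_all add: t_def x_def field_simps)
  have "integral {0..t} (\<lambda>s. integral {x - (t - s)..x + (t - s)} (\<lambda>y. u s y ^ 3))
      = integral {0..t} (\<lambda>s. oriented_integral (q + s) (p - s) (\<lambda>y. u s y ^ 3))"
    using xt by (intro integral_cong) (auto simp: oriented_integral_eq_integral algebra_simps)
  with mild \<open>t \<ge> 0\<close> assms show ?thesis
    by (simp add: cubic_wave_mild_solution_def U_def duhamel_def oriented_integral_eq_integral
        t_def[symmetric] x_def[symmetric] xt)
qed

lemma duhamel_has_derivative_p:
  "((\<lambda>p. duhamel p q) has_real_derivative Dplus p q / 2) (at p)"
proof -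
  have "((\<lambda>p. oriented_integral 0 ((p - q) / 2) (\<lambda>s. oriented_integral (q + s) (p - s) (\<lambda>y. u s y ^ 3)))
      has_real_derivative 1 / 2 * oriented_integral (q + (p - q) / 2) (p - (p - q) / 2) (\<lambda>y. u ((p - q) / 2) y ^ 3)
        + oriented_integral 0 ((p - q) / 2) (\<lambda>s. u s (p - s) ^ 3)) (at p)"
    by (rule oriented_integral_has_real_derivative_variable_limit)
      (auto intro!: continuous_on_oriented_integral[OF continuous_on_u_cube] continuous_intros
        derivative_eq_intros)
  moreover have "q + (p - q) / 2 = p - (p - q) / 2"
    by (simp add: field_simps)
  ultimately show ?thesis
    unfolding duhamel_def
    by (auto intro!: derivative_eq_intros u0_deriv u1_cont simp: Dplus_def field_simps)
qed

lemma duhamel_has_derivative_q: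
  "((\<lambda>q. duhamel p q) has_real_derivative - Dminus p q / 2) (at q)"
proof -
  have "((\<lambda>q. oriented_integral 0 ((p - q) / 2) (\<lambda>s. oriented_integral (q + s) (p - s) (\<lambda>y. u s y ^ 3)))
      has_real_derivative - 1 / 2 * oriented_integral (q + (p - q) / 2) (p - (p - q) / 2) (\<lambda>y. u ((p - q) / 2) y ^ 3)
        + oriented_integral 0 ((p - q) / 2) (\<lambda>s. - (u s (q + s) ^ 3))) (at q)"
    by (rule oriented_integral_has_real_derivative_variable_limit)
      (auto intro!: continuous_on_oriented_integral[OF continuous_on_u_cube] continuous_intros
        derivative_eq_intros)
  moreover have "q + (p - q) / 2 = p - (p - q) / 2"
    by (simp add: field_simps)
  ultimately show ?thesis
    unfolding duhamel_def
    by (auto intro!: derivative_eq_intros u0_deriv u1_cont simp: Dminus_def oriented_integral_uminus field_simps)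
qed

lemma U_has_derivative_p:
  assumes "q \<le> p"
  shows "((\<lambda>p. U p q) has_real_derivative Dplus p q / 2) (at p within {q..})"
  using has_field_derivative_at_within[OF duhamel_has_derivative_p]
  by (rule has_field_derivative_transform_within[where d = 1])
    (use assms in \<open>auto simp: U_eq_duhamel\<close>)

lemma U_has_derivative_q:
  assumes "q \<le> p"
  shows "((\<lambda>q. U p q) has_real_derivative - Dminus p q / 2) (at q within {..p})"
  using has_field_derivative_at_within[OF duhamel_has_derivative_q]
  by (rule has_field_derivative_transform_within[where d = 1])
    (use assms in \<open>auto simp: U_eq_duhamel\<close>)

lemma Dplus_has_derivative_q: "((\<lambda>q. Dplus p q) has_real_derivative U p q ^ 3 / 2) (at q)"
proof -
  have "((\<lambda>q. Dplus p q) has_real_derivative - (u ((p - q) / 2) (p - (p - q) / 2) ^ 3 * (- 1 / 2))) (at q)"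
    unfolding Dplus_def by (auto intro!: derivative_eq_intros continuous_intros)
  moreover have "p - (p - q) / 2 = (p + q) / 2"
    by (simp add: field_simps)
  ultimately show ?thesis
    by (simp add: U_def)
qed

lemma Dminus_has_derivative_p: "((\<lambda>p. Dminus p q) has_real_derivative - (U p q ^ 3 / 2)) (at p)"
proof -
  have "((\<lambda>p. Dminus p q) has_real_derivative - (u ((p - q) / 2) (q + (p - q) / 2) ^ 3 * (1 / 2))) (at p)"
    unfolding Dminus_def by (auto intro!: derivative_eq_intros continuous_intros)
  moreover have "q + (p - q) / 2 = (p + q) / 2"
    by (simp add: field_simps)
  ultimately show ?thesis
    by (simp add: U_def)
qed

lemma continuous_on_U [continuous_intros]:
  "continuous_on S f \<Longrightarrow> continuous_on S g \<Longrightarrow> continuous_on S (\<lambda>x. U (f x) (g x))"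
  unfolding U_def by (intro continuous_intros) auto

lemma continuous_on_Dplus [continuous_intros]:
  assumes "continuous_on S f" "continuous_on S g"
  shows "continuous_on S (\<lambda>x. Dplus (f x) (g x))"
proof -
  have "continuous_on UNIV (\<lambda>z. u (snd z) (fst z - snd z) ^ 3)"
    by (intro continuous_intros)
  with assms show ?thesis
    unfolding Dplus_def
    by (intro continuous_intros continuous_on_compose2[OF u0'_cont] continuous_on_compose2[OF u1_cont]
        continuous_on_oriented_integral[where k = "\<lambda>p s. u s (p - s) ^ 3"]) auto
qed

lemma continuous_on_Dminus [continuous_intros]:
  assumes "continuous_on S f" "continuous_on S g"
  shows "continuous_on S (\<lambda>x. Dminus (f x) (g x))"
proof -
  have "continuous_on UNIV (\<lambda>z. u (snd z) (fst z + snd z) ^ 3)"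
    by (intro continuous_intros)
  with assms show ?thesis
    unfolding Dminus_def
    by (intro continuous_intros continuous_on_compose2[OF u0'_cont] continuous_on_compose2[OF u1_cont]
        continuous_on_oriented_integral[where k = "\<lambda>q s. u s (q + s) ^ 3"]) auto
qed

lemma U_diag: "U q q = u0 q"
  using U_eq_duhamel[of q q] by (simp add: duhamel_def)

lemma Dplus_diag: "Dplus q q = u0' q + u1 q"
  by (simp add: Dplus_def)

lemma Dminus_diag: "Dminus p p = u1 p - u0' p"
  by (simp add: Dminus_def)

lemma energy_Dplus:
  assumes "q0 \<le> p0" and K: "\<And>y. (u0' y + u1 y) ^ 2 + u0 y ^ 4 / 2 \<le> K"
  shows "integral {q0..p0} (\<lambda>p. Dplus p q0 ^ 2) \<le> K * (p0 - q0)"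
proof -
  have "oriented_integral p0 q0 (\<lambda>p. Dplus p q0 ^ 2)
      = oriented_integral p0 q0 (\<lambda>q. Dplus q q ^ 2 + U q q ^ 4 / 2 - U p0 q ^ 4 / 2)"
  proof (rule oriented_integral_triangle[where F = "\<lambda>q p. Dplus p q ^ 2" and G = "\<lambda>q p. U p q ^ 4 / 2"
        and H = "\<lambda>q p. Dplus p q * U p q ^ 3"])
    show "((\<lambda>q. Dplus p q ^ 2) has_real_derivative Dplus p q * U p q ^ 3) (at q)" for p q
      by (rule DERIV_cong[OF DERIV_power[OF Dplus_has_derivative_q]]) simp
    fix q p assume "q \<in> {min p0 q0..max p0 q0}" and p: "p \<in> {min p0 q..max p0 q}"
    then have segment: "{min p0 q..max p0 q} = {q..p0}"
      using assms(1) by auto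
    have "((\<lambda>p. U p q) has_real_derivative Dplus p q / 2) (at p within {q..p0})"
      using p unfolding segment by (intro DERIV_subset[OF U_has_derivative_p]) auto
    from DERIV_cdivide[OF DERIV_power[OF this, of 4], of 2]
    show "((\<lambda>p. U p q ^ 4 / 2) has_real_derivative Dplus p q * U p q ^ 3) (at p within {min p0 q..max p0 q})"
      unfolding segment by (simp add: field_simps)
  qed (intro continuous_intros)+
  then have "integral {q0..p0} (\<lambda>p. Dplus p q0 ^ 2)
      = integral {q0..p0} (\<lambda>q. Dplus q q ^ 2 + U q q ^ 4 / 2 - U p0 q ^ 4 / 2)"
    using assms(1) by (simp add: oriented_integral_swap[of p0] oriented_integral_eq_integral)
  also have "\<dots> \<le> integral {q0..p0} (\<lambda>_. K)"
  proof (intro integral_le integrable_continuous_real continuous_intros)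
    fix q
    have "0 \<le> U p0 q ^ 4"
      by simp
    with K[of q] show "Dplus q q ^ 2 + U q q ^ 4 / 2 - U p0 q ^ 4 / 2 \<le> K"
      unfolding Dplus_diag U_diag by linarith
  qed auto
  finally show ?thesis
    using assms(1) by (simp add: mult.commute)
qed

lemma energy_U:
  assumes "q0 \<le> p0" and K: "\<And>y. (u1 y - u0' y) ^ 2 + u0 y ^ 4 / 2 \<le> K"
  shows "integral {q0..p0} (\<lambda>p. U p q0 ^ 4) \<le> 2 * K * (p0 - q0)"
proof -
  have "oriented_integral q0 p0 (\<lambda>q. Dminus p0 q ^ 2)
      = oriented_integral q0 p0 (\<lambda>p. Dminus p p ^ 2 + U p p ^ 4 / 2 - U p q0 ^ 4 / 2)"
  proof (rule oriented_integral_triangle[where F = "\<lambda>p q. Dminus p q ^ 2" and G = "\<lambda>p q. U p q ^ 4 / 2"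
        and H = "\<lambda>p q. - (Dminus p q * U p q ^ 3)"])
    show "((\<lambda>p. Dminus p q ^ 2) has_real_derivative - (Dminus p q * U p q ^ 3)) (at p)" for p q
      by (rule DERIV_cong[OF DERIV_power[OF Dminus_has_derivative_p]]) simp
    fix p q assume "p \<in> {min q0 p0..max q0 p0}" and q: "q \<in> {min q0 p..max q0 p}"
    then have segment: "{min q0 p..max q0 p} = {q0..p}"
      using assms(1) by auto
    have "((\<lambda>q. U p q) has_real_derivative - Dminus p q / 2) (at q within {q0..p})"
      using q unfolding segment by (intro DERIV_subset[OF U_has_derivative_q]) auto
    from DERIV_cdivide[OF DERIV_power[OF this, of 4], of 2]
    show "((\<lambda>q. U p q ^ 4 / 2) has_real_derivative - (Dminus p q * U p q ^ 3)) (at q within {min q0 p..max q0 p})"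
      unfolding segment by (simp add: field_simps)
  qed (intro continuous_intros)+
  then have "integral {q0..p0} (\<lambda>q. Dminus p0 q ^ 2)
      = integral {q0..p0} (\<lambda>p. Dminus p p ^ 2 + U p p ^ 4 / 2 - U p q0 ^ 4 / 2)"
    using assms(1) by (simp add: oriented_integral_eq_integral)
  also have "\<dots> = integral {q0..p0} (\<lambda>p. Dminus p p ^ 2 + U p p ^ 4 / 2)
      - integral {q0..p0} (\<lambda>p. U p q0 ^ 4) / 2"
    by (subst integral_diff) (auto intro!: integrable_continuous_real continuous_intros)
  finally have "integral {q0..p0} (\<lambda>p. U p q0 ^ 4) / 2
      = integral {q0..p0} (\<lambda>p. Dminus p p ^ 2 + U p p ^ 4 / 2) - integral {q0..p0} (\<lambda>q. Dminus p0 q ^ 2)"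
    by simp
  also have "\<dots> \<le> integral {q0..p0} (\<lambda>_. K) - 0"
  proof (intro diff_mono integral_le integral_nonneg integrable_continuous_real continuous_intros)
    show "Dminus p p ^ 2 + U p p ^ 4 / 2 \<le> K" for p
      using K[of p] by (simp add: Dminus_diag U_diag)
  qed auto
  finally show ?thesis
    using assms(1) by (simp add: algebra_simps)
qed

lemma abs_U_le:
  assumes "c \<ge> 1" and "q0 \<le> p0" and "p0 - q0 = 2 * c ^ 3"
    and K_plus: "\<And>y. (u0' y + u1 y) ^ 2 + u0 y ^ 4 / 2 \<le> K"
    and K_minus: "\<And>y. (u1 y - u0' y) ^ 2 + u0 y ^ 4 / 2 \<le> K"
  shows "\<bar>U p0 q0\<bar> \<le> (5 * K + 2) * c"
proof -
  define a where "a = p0 - 1 / c"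
  have "0 < 1 / c" "1 / c \<le> 1" "1 \<le> c ^ 3"
    using \<open>c \<ge> 1\<close> by simp_all
  then have "q0 \<le> a" "a \<le> p0" "p0 - a = 1 / c"
    using assms(3) unfolding a_def by linarith+
  have "0 \<le> (u0' 0 + u1 0) ^ 2 + u0 0 ^ 4 / 2"
    by simp
  with K_plus[of 0] have "0 \<le> K"
    by linarith
  have "integral {a..p0} (\<lambda>p. U p q0 ^ 4) \<le> integral {q0..p0} (\<lambda>p. U p q0 ^ 4)"
    using \<open>q0 \<le> a\<close> by (intro integral_subset_le integrable_continuous_real continuous_intros) auto
  also have "\<dots> \<le> 4 * K * c ^ 3"
    using energy_U[OF \<open>q0 \<le> p0\<close> K_minus] by (simp add: assms(3))
  finally have quartic: "integral {a..p0} (\<lambda>p. U p q0 ^ 4) \<le> 4 * K * c ^ 3" .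
  have "integral {a..p0} (\<lambda>p. (Dplus p q0 / 2) ^ 2) = integral {a..p0} (\<lambda>p. Dplus p q0 ^ 2) / 4"
    by (simp add: power_divide)
  also have "\<dots> \<le> integral {q0..p0} (\<lambda>p. Dplus p q0 ^ 2) / 4"
    using \<open>q0 \<le> a\<close>
    by (intro divide_right_mono integral_subset_le integrable_continuous_real continuous_intros) auto
  also have "\<dots> \<le> K / 2 * c ^ 3"
    using energy_Dplus[OF \<open>q0 \<le> p0\<close> K_plus] by (simp add: assms(3))
  finally have square: "integral {a..p0} (\<lambda>p. (Dplus p q0 / 2) ^ 2) \<le> K / 2 * c ^ 3" .
  have "\<bar>U p0 q0\<bar> \<le> (max 1 (4 * K) + (K / 2 + 1) / 2) * c"
  proof (rule abs_le_of_quartic_and_square_integrals[OF _ \<open>a \<le> p0\<close> \<open>p0 - a = 1 / c\<close> _ _ quartic square])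
    show "((\<lambda>p. U p q0) has_real_derivative Dplus p q0 / 2) (at p within {a..p0})" if "p \<in> {a..p0}" for p
      using that \<open>q0 \<le> a\<close> by (intro DERIV_subset[OF U_has_derivative_p]) auto
  qed (use \<open>c \<ge> 1\<close> in \<open>auto intro!: continuous_intros\<close>)
  also have "\<dots> \<le> (5 * K + 2) * c"
    using \<open>0 \<le> K\<close> \<open>c \<ge> 1\<close> by (intro mult_right_mono) (auto simp: max_def)
  finally show ?thesis .
qed

lemma abs_u_le:
  assumes "t \<ge> 1"
    and "\<And>y. (u0' y + u1 y) ^ 2 + u0 y ^ 4 / 2 \<le> K"
    and "\<And>y. (u1 y - u0' y) ^ 2 + u0 y ^ 4 / 2 \<le> K"
  shows "\<bar>u t x\<bar> \<le> (5 * K + 2) * t powr (1 / 3)"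
proof -
  have "t powr (1 / 3) \<ge> 1" and "(t powr (1 / 3)) ^ 3 = t"
    using assms(1) by (simp_all add: ge_one_powr_ge_zero powr_power)
  with assms abs_U_le[of "t powr (1 / 3)" "x - t" "x + t"] show ?thesis
    by (simp add: U_def)
qed

end

lemma sum_square_plus_quartic_le:
  fixes a b c A B D :: real
  assumes "\<bar>a\<bar> \<le> B" and "\<bar>b\<bar> \<le> D" and "\<bar>c\<bar> \<le> A"
  shows "(a + b) ^ 2 + c ^ 4 / 2 \<le> (B + D) ^ 2 + A ^ 4 / 2"
proof -
  have "\<bar>a + b\<bar> ^ 2 \<le> (B + D) ^ 2" and "\<bar>c\<bar> ^ 4 \<le> A ^ 4"
    using assms by (intro power_mono; linarith)+
  then show ?thesis
    by (simp add: power_abs)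
qed

theorem proposition1:
  fixes A B D :: real
  shows "\<exists>C :: real. \<forall>(u0 :: real \<Rightarrow> real) (u0' :: real \<Rightarrow> real) (u1 :: real \<Rightarrow> real) (u :: real \<Rightarrow> real \<Rightarrow> real).
           (\<forall>x. (u0 has_real_derivative u0' x) (at x)) \<and> continuous_on UNIV u0' \<and>
           continuous_on UNIV u1 \<and>
           (\<forall>x. \<bar>u0 x\<bar> \<le> A) \<and> (\<forall>x. \<bar>u0' x\<bar> \<le> B) \<and> (\<forall>x. \<bar>u1 x\<bar> \<le> D) \<and>
           cubic_wave_mild_solution u0 u1 u
           \<longrightarrow> (\<forall>t x. t \<ge> 1 \<longrightarrow> \<bar>u t x\<bar> \<le> C * t powr (1/3))"
proof (intro exI[of _ "5 * ((B + D) ^ 2 + A ^ 4 / 2) + 2"] allI impI, elim conjE)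
  fix u0 u0' u1 :: "real \<Rightarrow> real" and u :: "real \<Rightarrow> real \<Rightarrow> real" and t x :: real
  assume "\<forall>x. (u0 has_real_derivative u0' x) (at x)" "continuous_on UNIV u0'" "continuous_on UNIV u1"
    "cubic_wave_mild_solution u0 u1 u" "t \<ge> 1"
    and bounds: "\<forall>x. \<bar>u0 x\<bar> \<le> A" "\<forall>x. \<bar>u0' x\<bar> \<le> B" "\<forall>x. \<bar>u1 x\<bar> \<le> D"
  then interpret cubic_wave_mild u0 u0' u1 u
    by unfold_locales auto
  show "\<bar>u t x\<bar> \<le> (5 * ((B + D) ^ 2 + A ^ 4 / 2) + 2) * t powr (1 / 3)"
  proof (rule abs_u_le[OF \<open>t \<ge> 1\<close>])
    fix y
    show "(u0' y + u1 y) ^ 2 + u0 y ^ 4 / 2 \<le> (B + D) ^ 2 + A ^ 4 / 2"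
      using bounds by (intro sum_square_plus_quartic_le) auto
    show "(u1 y - u0' y) ^ 2 + u0 y ^ 4 / 2 \<le> (B + D) ^ 2 + A ^ 4 / 2"
      using bounds sum_square_plus_quartic_le[of "- u0' y" B "u1 y" D "u0 y" A] by simp
  qed
qed

end
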